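(* For every integer $n\ge1$, $$f(n)=\begin{cases}\lfloor n\varphi\rfloor, & \text{if there exists } m\in\mathbb{N} \text{ with } n-1=\lfloor m\varphi\rfloor,\\ \lfloor n/\varphi\rfloor+1, & \text{otherwise,}\end{cases}$$ where $\varphi=(1+\sqrt5)/2$.
   Context: $\mathbb{N}=\{0,1,2,\dots\}$. The sequence $f:\mathbb{N}\to\mathbb{N}$ is defined greedily: $f(0)=0$, and for $n\ge1$, $f(n)$ is the least natural number such that (i) $f(n)\notin\{f(0),f(1),\dots,f(n-1)\}$ and (ii) $\sum_{1\le i\le n} f(i)$ is divisible by $n$. *)

theory Defs
  imports Complex_Main
begin

fun greedy_seq :: "nat \<Rightarrow> nat list" where
  "greedy_seq 0 = [0]"
| "greedy_seq (Suc n) =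
     (let prev = greedy_seq n
      in prev @ [LEAST k. k \<notin> set prev \<and> Suc n dvd (sum_list prev + k)])"

definition f :: "nat \<Rightarrow> nat" where
  "f n = greedy_seq n ! n"

definition phi :: real where
  "phi = (1 + sqrt 5) / 2"

lemma greedy_seq_length: "length (greedy_seq n) = Suc n"
  by (induction n) (simp_all add: Let_def)

end

theory Submission
  imports Defs "HOL-Computational_Algebra.Primes"
begin

(*
  Write d n = nat \<lfloor>n / phi\<rfloor> and let g be the claimed closed form. Since 1/phi < 1, d increases
  by 0 or 1 at each step, and it increases from n to n + 1 exactly when n is a lower Wythoff number
  \<lfloor>m phi\<rfloor>. Hence the prefix sums telescope to g 0 + ... + g n = n (d n + 1), which n divides.
  Moreover g is an involution (it exchanges the two Beatty-type branches), so its values are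
  distinct. Finally, a smaller admissible value y at position n would differ from g n by a positive
  multiple of n; this forces y = 0 or y = d n, and both already occur before position n.
*)


lemma prime_square_eq_mult_square:
  fixes p j n :: nat
  assumes "prime p" "j\<^sup>2 = p * n\<^sup>2"
  shows "n = 0"
  using assms(2)
proof (induction n arbitrary: j rule: less_induct)
  case (less n)
  have p_dvd_square: "p dvd x" if "p dvd x\<^sup>2" for x :: nat
    using prime_dvd_power[OF assms(1) that] .
  obtain k where k: "j = p * k"
    using p_dvd_square[of j] less.prems by auto
  have p_pos: "p > 0"
    using assms(1) prime_gt_0_nat by blast
  have "p * (p * k\<^sup>2) = p * n\<^sup>2"
    using less.prems unfolding k by (simp add: power2_eq_square mult_ac)
  then have nk: "n\<^sup>2 = p * k\<^sup>2"
    using p_pos by simp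
  obtain l where l: "n = p * l"
    using p_dvd_square[of n] nk by auto
  have "p * (p * l\<^sup>2) = p * k\<^sup>2"
    using nk unfolding l by (simp add: power2_eq_square mult_ac)
  then have "k\<^sup>2 = p * l\<^sup>2"
    using p_pos by simp
  show "n = 0"
  proof (rule ccontr)
    assume "n \<noteq> 0"
    then have "l < n"
      using l prime_gt_1_nat[OF assms(1)] by simp
    with \<open>k\<^sup>2 = p * l\<^sup>2\<close> have "l = 0"
      using less.IH by blast
    with l \<open>n \<noteq> 0\<close> show False by simp
  qed
qed

lemma phi_gt_1: "phi > 1" and phi_lt_2: "phi < 2"
proof -
  have "2 < sqrt 5" "sqrt 5 < 3"
    by (simp_all add: real_less_rsqrt real_less_lsqrt)
  then show "phi > 1" "phi < 2"
    by (simp_all add: phi_def)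
qed

lemma phi_pos: "phi > 0"
  using phi_gt_1 by simp

lemma phi_squared: "phi * phi = phi + 1"
  by (simp add: phi_def field_simps)

lemma mult_phi_squared: "x * phi * phi = x * phi + x"
  by (simp add: mult.assoc phi_squared distrib_left)

lemma divide_phi_eq: "x / phi = x * (phi - 1)"
proof -
  have "x * (phi - 1) * phi = x * (phi * phi - phi)"
    by (simp add: algebra_simps)
  then have "x = x * (phi - 1) * phi"
    using phi_squared by simp
  then show ?thesis
    using phi_pos by (simp add: divide_eq_eq)
qed

lemma mult_phi_eq: "x * phi = x + x / phi"
  by (simp add: divide_phi_eq algebra_simps)

lemma mult_phi_eq_int_imp_zero:
  assumes "real n * phi = of_int k"
  shows "n = 0"
proof -
  have "real n * sqrt 5 = of_int (2 * k - int n)"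
    using assms by (simp add: phi_def field_simps)
  then have "(real n * sqrt 5)\<^sup>2 = (of_int (2 * k - int n))\<^sup>2"
    by simp
  then have "real_of_int (5 * (int n)\<^sup>2) = of_int ((2 * k - int n)\<^sup>2)"
    by (simp add: power_mult_distrib)
  then have "int (5 * n\<^sup>2) = \<bar>2 * k - int n\<bar>\<^sup>2"
    unfolding of_int_eq_iff by simp
  also have "\<dots> = int ((nat \<bar>2 * k - int n\<bar>)\<^sup>2)"
    by simp
  finally show "n = 0"
    using prime_square_eq_mult_square[of 5] by (simp only: of_nat_eq_iff) simp
qed

lemma divide_phi_eq_int_imp_zero:
  assumes "real n / phi = of_int k"
  shows "n = 0"
  using assms mult_phi_eq[of "real n"]
  by (intro mult_phi_eq_int_imp_zero[of n "int n + k"]) simp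

definition floor_div_phi :: "nat \<Rightarrow> nat" where
  "floor_div_phi n = nat \<lfloor>real n / phi\<rfloor>"

lemma le_floor_div_phi_iff: "k \<le> floor_div_phi n \<longleftrightarrow> real k \<le> real n / phi"
proof -
  have "\<lfloor>real n / phi\<rfloor> \<ge> 0"
    using phi_pos by simp
  then show ?thesis
    unfolding floor_div_phi_def by (simp add: le_nat_iff le_floor_iff)
qed

lemma floor_div_phi_less_iff: "floor_div_phi n < k \<longleftrightarrow> real n / phi < real k"
  using le_floor_div_phi_iff[of k n] by linarith

lemma floor_div_phi_le: "real (floor_div_phi n) \<le> real n / phi"
  using le_floor_div_phi_iff by blast

lemma less_floor_div_phi_Suc: "real n / phi < real (Suc (floor_div_phi n))"
  using floor_div_phi_less_iff by blast

lemma floor_div_phi_less: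
  assumes "n \<noteq> 0"
  shows "real (floor_div_phi n) < real n / phi"
proof -
  have "real n / phi \<noteq> of_int (int (floor_div_phi n))"
    using assms divide_phi_eq_int_imp_zero by blast
  then show ?thesis
    using floor_div_phi_le[of n] by simp
qed

lemma floor_div_phi_0 [simp]: "floor_div_phi 0 = 0"
  by (simp add: floor_div_phi_def)

lemma floor_div_phi_Suc_0 [simp]: "floor_div_phi (Suc 0) = 0"
proof -
  have "floor_div_phi 1 < 1"
    unfolding floor_div_phi_less_iff using phi_gt_1 by simp
  then show ?thesis
    by simp
qed

lemma floor_div_phi_less_self:
  assumes "n \<noteq> 0"
  shows "floor_div_phi n < n"
  using assms phi_gt_1 by (simp add: floor_div_phi_less_iff divide_less_eq)

lemma floor_div_phi_le_Suc: "floor_div_phi n \<le> floor_div_phi (Suc n)"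
  using floor_div_phi_le[of n] phi_pos
  by (auto simp: le_floor_div_phi_iff divide_right_mono intro: order_trans)

lemma floor_div_phi_Suc_le: "floor_div_phi (Suc n) \<le> Suc (floor_div_phi n)"
proof -
  have "real (Suc n) / phi < real n / phi + 1"
    using phi_gt_1 by (simp add: add_divide_distrib)
  also have "\<dots> < real (Suc (Suc (floor_div_phi n)))"
    using less_floor_div_phi_Suc[of n] by simp
  finally show ?thesis
    unfolding less_Suc_eq_le[symmetric] floor_div_phi_less_iff .
qed

lemma nat_floor_mult_phi: "nat \<lfloor>real n * phi\<rfloor> = n + floor_div_phi n"
proof -
  have "\<lfloor>real n * phi\<rfloor> = int n + \<lfloor>real n / phi\<rfloor>"
    using floor_add_int[of "real n / phi" "int n"] by (simp add: mult_phi_eq add.commute)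
  then show ?thesis
    using phi_pos by (simp add: floor_div_phi_def nat_add_distrib)
qed

definition lower_wythoff :: "int \<Rightarrow> bool" where
  "lower_wythoff k \<longleftrightarrow> (\<exists>m::nat. k = \<lfloor>real m * phi\<rfloor>)"

lemma lower_wythoff_0: "lower_wythoff 0"
  unfolding lower_wythoff_def by (rule exI[of _ 0]) simp

(* Because phi is irrational, \<lfloor>m phi\<rfloor> = n means n / phi < m < (n + 1) / phi. *)
lemma lower_wythoff_iff_floor_div_phi_less:
  assumes "n \<noteq> 0"
  shows "lower_wythoff (int n) \<longleftrightarrow> floor_div_phi n < floor_div_phi (Suc n)"
proof
  assume "lower_wythoff (int n)"
  then obtain m where m: "\<lfloor>real m * phi\<rfloor> = int n"
    unfolding lower_wythoff_def by auto
  then have "m \<noteq> 0"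
    using assms by (cases "m = 0") auto
  then have "real m * phi \<noteq> of_int (int n)"
    using mult_phi_eq_int_imp_zero by blast
  with m have "real n < real m * phi" "real m * phi < real (Suc n)"
    by linarith+
  then have "floor_div_phi n < m" "m \<le> floor_div_phi (Suc n)"
    using phi_pos by (simp_all add: floor_div_phi_less_iff le_floor_div_phi_iff
        pos_divide_less_eq pos_le_divide_eq)
  then show "floor_div_phi n < floor_div_phi (Suc n)"
    by simp
next
  assume less: "floor_div_phi n < floor_div_phi (Suc n)"
  define m where "m = floor_div_phi (Suc n)"
  have "real n < real m * phi" "real m * phi \<le> real (Suc n)"
    using less floor_div_phi_le[of "Suc n"] phi_pos
    by (simp_all add: m_def floor_div_phi_less_iff pos_divide_less_eq pos_le_divide_eq)
  moreover have "real m * phi \<noteq> of_int (int (Suc n))"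
    using less mult_phi_eq_int_imp_zero unfolding m_def by fastforce
  ultimately have "\<lfloor>real m * phi\<rfloor> = int n"
    by (simp add: floor_eq_iff)
  then show "lower_wythoff (int n)"
    unfolding lower_wythoff_def by metis
qed

lemma floor_div_phi_Suc:
  assumes "n \<noteq> 0"
  shows "floor_div_phi (Suc n) =
    (if lower_wythoff (int n) then Suc (floor_div_phi n) else floor_div_phi n)"
  using lower_wythoff_iff_floor_div_phi_less[OF assms]
    floor_div_phi_le_Suc[of n] floor_div_phi_Suc_le[of n] by auto

definition greedy_closed_form :: "nat \<Rightarrow> nat" where
  "greedy_closed_form n =
    (if n = 0 then 0
     else if lower_wythoff (int n - 1) then n + floor_div_phi n
     else Suc (floor_div_phi n))"

lemma greedy_closed_form_0 [simp]: "greedy_closed_form 0 = 0"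
  by (simp add: greedy_closed_form_def)

lemma greedy_closed_form_Suc:
  "greedy_closed_form (Suc n) =
    (if lower_wythoff (int n) then Suc n + floor_div_phi (Suc n) else Suc (floor_div_phi (Suc n)))"
  by (simp add: greedy_closed_form_def)

lemma greedy_closed_form_Suc_0 [simp]: "greedy_closed_form (Suc 0) = Suc 0"
  using greedy_closed_form_Suc[of 0] by (simp add: lower_wythoff_0)

lemma sum_greedy_closed_form:
  "(\<Sum>i\<le>n. greedy_closed_form i) = n * Suc (floor_div_phi n)"
proof (induction n)
  case (Suc n)
  show ?case
  proof (cases "n = 0")
    case False
    then show ?thesis
      using Suc floor_div_phi_Suc[OF False] by (simp add: greedy_closed_form_Suc)
  qed simp
qed simp

lemma greedy_closed_form_involutive_wythoff:
  assumes "q \<noteq> 0" "lower_wythoff (int q)"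
  shows "greedy_closed_form (greedy_closed_form (Suc q)) = Suc q"
proof -
  define k where "k = floor_div_phi (Suc q)"
  have "real q / phi < real k"
    using assms lower_wythoff_iff_floor_div_phi_less
    by (simp add: k_def floor_div_phi_less_iff)
  then have "real q * phi \<le> real (q + k)"
    by (simp add: mult_phi_eq)
  then have lower: "q \<le> floor_div_phi (q + k)"
    using phi_pos by (simp add: le_floor_div_phi_iff pos_le_divide_eq)
  have "real k < real (Suc q) / phi"
    using floor_div_phi_less[of "Suc q"] by (simp add: k_def)
  then have "real (Suc q + k) < real (Suc q) * phi"
    by (simp add: mult_phi_eq)
  then have upper: "floor_div_phi (Suc (q + k)) < Suc q"
    using phi_pos by (simp add: floor_div_phi_less_iff pos_divide_less_eq)
  have "floor_div_phi (Suc (q + k)) = floor_div_phi (q + k)"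
    using lower upper floor_div_phi_le_Suc[of "q + k"] by simp
  then have "\<not> lower_wythoff (int (q + k))"
    using lower_wythoff_iff_floor_div_phi_less[of "q + k"] assms(1) by simp
  then show ?thesis
    using assms lower upper floor_div_phi_le_Suc[of "q + k"]
    by (simp add: greedy_closed_form_Suc k_def[symmetric])
qed

lemma greedy_closed_form_involutive_non_wythoff:
  assumes "q \<noteq> 0" "\<not> lower_wythoff (int q)"
  shows "greedy_closed_form (greedy_closed_form (Suc q)) = Suc q"
proof -
  define k where "k = floor_div_phi q"
  have k_Suc: "floor_div_phi (Suc q) = k"
    using floor_div_phi_Suc[OF assms(1)] assms(2) by (simp add: k_def)
  have below: "real k * phi \<le> real q"
    using floor_div_phi_le[of q] phi_pos by (simp add: k_def pos_le_divide_eq)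
  have above: "real (Suc q) < real (Suc k) * phi"
    using less_floor_div_phi_Suc[of "Suc q"] phi_pos by (simp add: k_Suc pos_divide_less_eq)
  have "real k \<le> real k * phi"
    using phi_gt_1 mult_left_mono[of 1 phi "real k"] by simp
  then have "k \<le> q"
    using below by linarith
  have "\<lfloor>real (q - k) * phi\<rfloor> = int k"
  proof -
    have "(real q - real k) * phi - real k = phi * (real q - real k * phi)"
      using mult_phi_squared[of "real k"] by (simp add: algebra_simps)
    also have "\<dots> \<ge> 0"
      using below phi_pos by simp
    finally have "real k \<le> (real q - real k) * phi"
      by simp
    moreover
    have "real (Suc q) * phi < real (Suc k) * phi * phi"
      using above phi_pos by simp
    then have "(real q - real k) * phi < real k + 1"
      using mult_phi_squared[of "real k"] phi_squared by (simp add: algebra_simps)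
    ultimately show ?thesis
      using \<open>k \<le> q\<close> by (simp add: floor_eq_iff)
  qed
  then have "lower_wythoff (int k)"
    unfolding lower_wythoff_def by metis
  moreover have "\<lfloor>real (Suc k) * phi\<rfloor> = int (Suc q)"
    using above below phi_lt_2 by (simp add: floor_eq_iff algebra_simps)
  then have "Suc k + floor_div_phi (Suc k) = Suc q"
    using nat_floor_mult_phi[of "Suc k"] by simp
  ultimately show ?thesis
    using assms by (simp add: greedy_closed_form_Suc k_Suc)
qed

lemma greedy_closed_form_involution: "greedy_closed_form (greedy_closed_form n) = n"
proof (cases n)
  case (Suc q)
  then show ?thesis
    using greedy_closed_form_involutive_wythoff[of q]
      greedy_closed_form_involutive_non_wythoff[of q]
    by (cases "q = 0") auto
qed simp

lemma greedy_closed_form_floor_div_phi_less: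
  assumes "N \<noteq> 0"
  shows "greedy_closed_form (floor_div_phi N) < N"
proof (cases "floor_div_phi N")
  case (Suc u)
  have "floor_div_phi N < N"
    using floor_div_phi_less_self[OF assms] .
  show ?thesis
  proof (cases "lower_wythoff (int u)")
    case True
    have "real (Suc u) * phi \<le> real N"
      using floor_div_phi_le[of N] phi_pos by (simp add: Suc pos_le_divide_eq)
    moreover have "real (Suc u) * phi \<noteq> of_int (int N)"
      using mult_phi_eq_int_imp_zero by fastforce
    ultimately have "\<lfloor>real (Suc u) * phi\<rfloor> < int N"
      by (simp add: floor_less_iff)
    then show ?thesis
      using True nat_floor_mult_phi[of "Suc u"] by (simp add: Suc greedy_closed_form_Suc)
  next
    case False
    then show ?thesis
      using floor_div_phi_less_self[of "Suc u"] \<open>floor_div_phi N < N\<close>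
      by (simp add: Suc greedy_closed_form_Suc)
  qed
qed (use assms in simp)

lemma greedy_closed_form_minimal:
  assumes "N \<noteq> 0" "y < greedy_closed_form N" "N dvd greedy_closed_form N - y"
  shows "y \<in> greedy_closed_form ` {..<N}"
proof -
  obtain n where N: "N = Suc n"
    using assms(1) not0_implies_Suc by blast
  obtain t where t: "greedy_closed_form N - y = N * t"
    using assms(3) by blast
  moreover have "greedy_closed_form N - y \<noteq> 0"
    using assms(2) by simp
  ultimately have "t \<noteq> 0"
    by auto
  then have "N + y \<le> greedy_closed_form N"
    using t assms(2) by (cases t) auto
  show ?thesis
  proof (cases "lower_wythoff (int n)")
    case True
    then have g: "greedy_closed_form N = N + floor_div_phi N"
      by (simp add: N greedy_closed_form_Suc)
    have "floor_div_phi N < N"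
      using floor_div_phi_less_self[OF assms(1)] .
    then have "N * t < N * 2"
      using t g by linarith
    then have "t = 1"
      using \<open>t \<noteq> 0\<close> by simp
    then have "y = floor_div_phi N"
      using t g assms(2) by simp
    then have "y = greedy_closed_form (greedy_closed_form (floor_div_phi N))"
      by (simp add: greedy_closed_form_involution)
    then show ?thesis
      using greedy_closed_form_floor_div_phi_less[OF assms(1)] by blast
  next
    case False
    then have "greedy_closed_form N \<le> N"
      using floor_div_phi_less_self[OF assms(1)] by (simp add: N greedy_closed_form_Suc)
    then have "y = greedy_closed_form 0"
      using \<open>N + y \<le> greedy_closed_form N\<close> by simp
    then show ?thesis
      using assms(1) by blast
  qed
qed

lemma greedy_seq_eq_map:
  fixes g :: "nat \<Rightarrow> nat"
  assumes "g 0 = 0"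
    and new: "\<And>N. N \<noteq> 0 \<Longrightarrow> g N \<notin> g ` {..<N}"
    and dvd: "\<And>N. N dvd (\<Sum>i\<le>N. g i)"
    and least: "\<And>N y. N \<noteq> 0 \<Longrightarrow> y < g N \<Longrightarrow> N dvd (\<Sum>i<N. g i) + y \<Longrightarrow> y \<in> g ` {..<N}"
  shows "greedy_seq n = map g [0..<Suc n]"
proof (induction n)
  case 0
  show ?case
    using assms(1) by simp
next
  case (Suc n)
  define N where "N = Suc n"
  have set_prev: "set (greedy_seq n) = g ` {..<N}"
    by (simp add: Suc N_def atLeast0LessThan del: upt_Suc)
  have sum_prev: "sum_list (greedy_seq n) = (\<Sum>i<N. g i)"
    by (simp add: Suc N_def atLeast0LessThan sum_set_upt_conv_sum_list_nat[symmetric] del: upt_Suc)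
  have least_eq: "(LEAST k. k \<notin> g ` {..<N} \<and> N dvd (\<Sum>i<N. g i) + k) = g N"
  proof (rule Least_equality)
    show "g N \<notin> g ` {..<N} \<and> N dvd (\<Sum>i<N. g i) + g N"
      using new[of N] dvd[of N] by (simp add: N_def lessThan_Suc_atMost[symmetric])
  next
    show "g N \<le> y" if "y \<notin> g ` {..<N} \<and> N dvd (\<Sum>i<N. g i) + y" for y
      using least[of N y] that by (force simp: N_def)
  qed
  have "greedy_seq N =
      greedy_seq n @ [LEAST k. k \<notin> set (greedy_seq n) \<and> N dvd sum_list (greedy_seq n) + k]"
    by (simp add: N_def Let_def)
  also have "\<dots> = greedy_seq n @ [g N]"
    unfolding set_prev sum_prev least_eq ..
  finally show ?case
    using Suc.IH by (simp add: N_def)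
qed

lemma f_eq_greedy_closed_form: "f n = greedy_closed_form n"
proof -
  have "greedy_seq n = map greedy_closed_form [0..<Suc n]"
  proof (rule greedy_seq_eq_map)
    show "greedy_closed_form N \<notin> greedy_closed_form ` {..<N}" if "N \<noteq> 0" for N
      by (metis greedy_closed_form_involution imageE lessThan_iff less_irrefl)
  next
    show "N dvd (\<Sum>i\<le>N. greedy_closed_form i)" for N
      by (simp add: sum_greedy_closed_form)
  next
    fix N y
    assume N: "N \<noteq> 0" and y: "y < greedy_closed_form N"
      and dvd_y: "N dvd (\<Sum>i<N. greedy_closed_form i) + y"
    have "N dvd (\<Sum>i<N. greedy_closed_form i) + greedy_closed_form N"
      using sum_greedy_closed_form[of N] by (simp add: lessThan_Suc_atMost[symmetric])
    from dvd_diff_nat[OF this dvd_y] have "N dvd greedy_closed_form N - y"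
      by simp
    then show "y \<in> greedy_closed_form ` {..<N}"
      using greedy_closed_form_minimal N y by blast
  qed simp
  then show ?thesis
    by (simp add: f_def nth_map_upt del: upt_Suc)
qed

theorem theorem4:
  fixes n :: nat
  assumes "n \<ge> 1"
  shows "f n = (if \<exists>m::nat. int n - 1 = \<lfloor>real m * phi\<rfloor>
                then nat \<lfloor>real n * phi\<rfloor>
                else nat \<lfloor>real n / phi\<rfloor> + 1)"
  using assms
  by (simp add: f_eq_greedy_closed_form greedy_closed_form_def nat_floor_mult_phi
      flip: lower_wythoff_def floor_div_phi_def)

end
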